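(* Let $\mathfrak{g}$ be a finite-dimensional real Lie algebra with linear bivector $\bar\alpha^{ij}=\tfrac12c_k^{ij}X^k$. Every graph $\Gamma\in G_n$ whose operator $B_{\Gamma,\bar\alpha}$ is not identically zero is either a loop graph or a Sym-admissible graph. Thus the bi-differential operators occurring in Kontsevich's quantization of $\mathfrak{g}^*$ are of two types: those corresponding to loop graphs and those corresponding to Sym-admissible graphs.
   Context: Basis $X^1,\ldots,X^d$ of $\mathfrak{g}$ with $[X^i,X^j]=c_k^{ij}X^k$; the $X^i$ are linear coordinates on $\mathfrak{g}^*$, $\partial_i=\partial/\partial X^i$. $G_n$: oriented labeled graphs with vertex set $\{1,\ldots,n\}\cup\{X,Y\}$ and $2n$ edges, exactly two ordered edges $e_k^1,e_k^2$ starting at each aerial vertex $k$ and ending at vertices other than $k$, none starting at $X,Y$. $B_{\Gamma,\bar\alpha}(f,g)=\sum_{I:E_\Gamma\to\{1,\ldots,d\}}\Big[\prod_{k=1}^n\Big(\prod_{e=( *,k)}\partial_{I(e)}\Big)\bar\alpha^{I(e_k^1)I(e_k^2)}\Big]\Big(\prod_{e=( *,X)}\partial_{I(e)}\Big)f\,\Big(\prod_{e=( *,Y)}\partial_{I(e)}\Big)g$. Kontsevich's quantization of $\mathfrak{g}^*$ is $f\star g=\sum_n\epsilon^n\sum_{\Gamma\in G_n}w_K(\Gamma)B_{\Gamma,\bar\alpha}(f,g)$ for certain numerical weights $w_K(\Gamma)$. A loop graph is one containing a directed cycle. A graph is Sym-admissible if it is the graph with no edges, or if, after redirecting each edge ending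 at $X$ (resp. $Y$) to its own new leaf labeled $X$ (resp. $Y$), it becomes a disjoint union of rooted binary trees whose internal nodes are the aerial vertices (edges directed from a node to its two children) and whose leaves are the new $X/Y$ leaves. *)

theory Defs
  imports "HOL-Analysis.Analysis" "HOL-Library.FuncSet"
begin

datatype vtx = Aer nat | VX | VY

text \<open>A graph Gamma in G_n is given by assigning to each aerial vertex k in {1..n}
  the pair (target of e_k^1, target of e_k^2). Values outside {1..n} are irrelevant.\<close>
type_synonym graph = "nat \<Rightarrow> vtx \<times> vtx"

definition verts :: "nat \<Rightarrow> vtx set" where
  "verts n = Aer ` {1..n} \<union> {VX, VY}"

definition in_G :: "nat \<Rightarrow> graph \<Rightarrow> bool" where
  "in_G n \<Gamma> \<longleftrightarrow> (\<forall>k\<in>{1..n}.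
      fst (\<Gamma> k) \<in> verts n - {Aer k} \<and> snd (\<Gamma> k) \<in> verts n - {Aer k})"

text \<open>Edges: (k,1) is e_k^1 and (k,2) is e_k^2.\<close>
definition edges :: "nat \<Rightarrow> (nat \<times> nat) set" where
  "edges n = {1..n} \<times> {1, 2}"

definition tgt :: "graph \<Rightarrow> nat \<times> nat \<Rightarrow> vtx" where
  "tgt \<Gamma> e = (if snd e = 1 then fst (\<Gamma> (fst e)) else snd (\<Gamma> (fst e)))"

definition edges_into :: "nat \<Rightarrow> graph \<Rightarrow> vtx \<Rightarrow> (nat \<times> nat) list" where
  "edges_into n \<Gamma> v =
     filter (\<lambda>e. tgt \<Gamma> e = v) (concat (map (\<lambda>k. [(k, 1), (k, 2)]) [1..<Suc n]))"

definition pd :: "'d::finite \<Rightarrow> (real^'d \<Rightarrow> real) \<Rightarrow> (real^'d \<Rightarrow> real)" where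
  "pd i f = (\<lambda>x. frechet_derivative f (at x) (axis i 1))"

fun pds :: "'d::finite list \<Rightarrow> (real^'d \<Rightarrow> real) \<Rightarrow> (real^'d \<Rightarrow> real)" where
  "pds [] f = f"
| "pds (i # is) f = pd i (pds is f)"

definition smooth_fun :: "(real^'d::finite \<Rightarrow> real) \<Rightarrow> bool" where
  "smooth_fun f \<longleftrightarrow> (\<forall>is. pds is f differentiable_on UNIV)"

text \<open>Structure constants: c i j k = c_k^{ij}, i.e. [X^i, X^j] = sum_k c_k^{ij} X^k.\<close>
definition lin_bivector :: "('d::finite \<Rightarrow> 'd \<Rightarrow> 'd \<Rightarrow> real) \<Rightarrow> 'd \<Rightarrow> 'd \<Rightarrow> real^'d \<Rightarrow> real" where
  "lin_bivector c i j = (\<lambda>x. (1/2) * (\<Sum>k\<in>UNIV. c i j k * x $ k))"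

definition B_op :: "nat \<Rightarrow> graph \<Rightarrow> ('d::finite \<Rightarrow> 'd \<Rightarrow> real^'d \<Rightarrow> real)
                    \<Rightarrow> (real^'d \<Rightarrow> real) \<Rightarrow> (real^'d \<Rightarrow> real) \<Rightarrow> real^'d \<Rightarrow> real" where
  "B_op n \<Gamma> \<alpha> f g x =
     (\<Sum>I\<in>edges n \<rightarrow>\<^sub>E (UNIV :: 'd set).
        (\<Prod>k\<in>{1..n}. pds (map I (edges_into n \<Gamma> (Aer k))) (\<alpha> (I (k,1)) (I (k,2))) x)
        * pds (map I (edges_into n \<Gamma> VX)) f x
        * pds (map I (edges_into n \<Gamma> VY)) g x)"

definition edge_rel :: "nat \<Rightarrow> graph \<Rightarrow> (vtx \<times> vtx) set" where
  "edge_rel n \<Gamma> = {(Aer (fst e), tgt \<Gamma> e) | e. e \<in> edges n}"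

definition loop_graph :: "nat \<Rightarrow> graph \<Rightarrow> bool" where
  "loop_graph n \<Gamma> \<longleftrightarrow> (\<exists>v. (v, v) \<in> (edge_rel n \<Gamma>)\<^sup>+)"

text \<open>Rooted binary trees: internal nodes labelled by aerial vertices (ordered children:
  first child = target of e_k^1, second child = target of e_k^2), leaves labelled X or Y.\<close>
datatype xy = LX | LY
datatype btree = Leaf xy | Node nat btree btree

fun root_vtx :: "btree \<Rightarrow> vtx" where
  "root_vtx (Leaf LX) = VX"
| "root_vtx (Leaf LY) = VY"
| "root_vtx (Node k l r) = Aer k"

fun internal :: "btree \<Rightarrow> nat list" where
  "internal (Leaf a) = []"
| "internal (Node k l r) = k # internal l @ internal r"

text \<open>Every internal node k of the tree has as children exactly the targets of e_k^1, e_k^2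
  (edges to X / Y being redirected to their own new leaves).\<close>
fun tree_of_graph :: "graph \<Rightarrow> btree \<Rightarrow> bool" where
  "tree_of_graph \<Gamma> (Leaf a) = True"
| "tree_of_graph \<Gamma> (Node k l r) =
     (root_vtx l = fst (\<Gamma> k) \<and> root_vtx r = snd (\<Gamma> k)
      \<and> tree_of_graph \<Gamma> l \<and> tree_of_graph \<Gamma> r)"

text \<open>Sym-admissible: no edges, or the redirected graph is the disjoint union of the rooted
  binary trees ts (each aerial vertex is an internal node of exactly one tree, exactly once;
  all vertices of the redirected graph have a parent or are roots of internal-node trees).\<close>
definition sym_admissible :: "nat \<Rightarrow> graph \<Rightarrow> bool" where
  "sym_admissible n \<Gamma> \<longleftrightarrow> n = 0 \<or>
     (\<exists>ts :: btree list.
        (\<forall>t\<in>set ts. (\<exists>k l r. t = Node k l r) \<and> tree_of_graph \<Gamma> t)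
        \<and> distinct (concat (map internal ts))
        \<and> set (concat (map internal ts)) = {1..n})"

end

theory Submission
  imports Defs
begin

(* The bivector is linear in the coordinates, so every second derivative of it vanishes:
   if some aerial vertex receives two edges, every summand of B_Gamma contains a zero factor.
   So if B_Gamma is not zero, every aerial vertex has at most one parent. If moreover Gamma
   has no directed cycle, it is a forest: ancestors of a vertex form a chain, the two children
   of a vertex have disjoint sets of descendants, and every aerial vertex descends from a
   parentless one. The subtrees at the parentless vertices give the Sym-admissible
   decomposition. *)

lemma pd_const: "pd i (\<lambda>_. a) = (\<lambda>_. 0)"
  unfolding pd_def using frechet_derivative_const by auto

lemma pd_linear:
  assumes "linear f"
  shows "pd i f = (\<lambda>_. f (axis i 1))"
  unfolding pd_def using frechet_derivative_at[OF linear_imp_has_derivative[OF assms]] by metis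

lemma pds_linear_const:
  assumes "linear f" and "xs \<noteq> []"
  shows "\<exists>a. pds xs f = (\<lambda>_. a)"
  using assms(2)
proof (induction xs)
  case (Cons i xs)
  then show ?case by (cases "xs = []") (auto simp: pd_linear[OF assms(1)] pd_const)
qed simp

lemma pds_linear_eq_0:
  assumes "linear f" and "length xs \<ge> 2"
  shows "pds xs f = (\<lambda>_. 0)"
proof -
  obtain i ys where "xs = i # ys" "ys \<noteq> []"
    using assms(2) by (cases xs) (auto simp: Suc_le_length_iff)
  moreover obtain a where "pds ys f = (\<lambda>_. a)"
    using pds_linear_const[OF assms(1) \<open>ys \<noteq> []\<close>] by blast
  ultimately show ?thesis
    by (simp add: pd_const)
qed

lemma linear_lin_bivector: "linear (lin_bivector c i j)"
  unfolding lin_bivector_def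
  by (intro linearI) (simp_all add: sum_distrib_left sum.distrib ring_distribs mult.left_commute)

lemma B_op_eq_0_if_in_degree_ge_2:
  assumes "\<And>i j. linear (\<alpha> i j)" and "k \<in> {1..n}" and "length (edges_into n \<Gamma> (Aer k)) \<ge> 2"
  shows "B_op n \<Gamma> \<alpha> f g x = 0"
proof -
  have factor_0: "(\<Prod>k\<in>{1..n}. pds (map I (edges_into n \<Gamma> (Aer k))) (\<alpha> (I (k,1)) (I (k,2))) x) = 0" for I
    using assms by (intro prod_zero bexI[of _ k]) (simp_all add: pds_linear_eq_0)
  show ?thesis
    unfolding B_op_def by (intro sum.neutral ballI) (simp only: factor_0 mult_zero_left)
qed

lemma distinct_concat_map:
  assumes "distinct xs" and "\<And>x. x \<in> set xs \<Longrightarrow> distinct (f x)"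
    and "\<And>x y. x \<in> set xs \<Longrightarrow> y \<in> set xs \<Longrightarrow> x \<noteq> y \<Longrightarrow> set (f x) \<inter> set (f y) = {}"
  shows "distinct (concat (map f xs))"
  using assms
proof (induction xs)
  case (Cons x xs)
  have "set (f x) \<inter> set (concat (map f xs)) = {}"
    using Cons.prems by fastforce
  then show ?case
    using Cons by simp
qed simp

lemma distinct_edges_into: "distinct (edges_into n \<Gamma> v)"
  unfolding edges_into_def
  by (auto intro!: distinct_filter distinct_concat simp: distinct_map inj_on_def)

lemma set_edges_into: "set (edges_into n \<Gamma> v) = {e \<in> edges n. tgt \<Gamma> e = v}"
  unfolding edges_into_def edges_def by auto

lemma edge_into_unique:
  assumes "length (edges_into n \<Gamma> v) \<le> 1"
    and "e \<in> edges n" "tgt \<Gamma> e = v" and "e' \<in> edges n" "tgt \<Gamma> e' = v"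
  shows "e = e'"
proof -
  have "card (set (edges_into n \<Gamma> v)) \<le> Suc 0"
    using assms(1) by (simp add: distinct_card[OF distinct_edges_into])
  then have "\<forall>a\<in>set (edges_into n \<Gamma> v). \<forall>b\<in>set (edges_into n \<Gamma> v). a = b"
    by (simp add: card_le_Suc0_iff_eq)
  then show ?thesis
    using assms(2-) unfolding set_edges_into by blast
qed

lemma Aer_in_verts_iff: "Aer m \<in> verts n \<longleftrightarrow> m \<in> {1..n}"
  unfolding verts_def by auto

lemma edge_rel_iff:
  "(u, w) \<in> edge_rel n \<Gamma> \<longleftrightarrow> (\<exists>k\<in>{1..n}. u = Aer k \<and> (w = fst (\<Gamma> k) \<or> w = snd (\<Gamma> k)))"
  unfolding edge_rel_def edges_def tgt_def by force

lemma finite_edge_rel: "finite (edge_rel n \<Gamma>)"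
  unfolding edge_rel_def edges_def by (rule finite_image_set) simp

lemma reaches_aerial_imp_aerial: "(v, Aer m) \<in> (edge_rel n \<Gamma>)\<^sup>* \<Longrightarrow> \<exists>j. v = Aer j"
  by (erule converse_rtranclE) (auto simp: edge_rel_iff)

definition descendants :: "nat \<Rightarrow> graph \<Rightarrow> vtx \<Rightarrow> nat set" where
  "descendants n \<Gamma> v = {m. (v, Aer m) \<in> (edge_rel n \<Gamma>)\<^sup>*}"

lemma descendants_ground: "descendants n \<Gamma> VX = {}" "descendants n \<Gamma> VY = {}"
  unfolding descendants_def by (auto dest: reaches_aerial_imp_aerial)

lemma descendants_Aer:
  assumes "k \<in> {1..n}"
  shows "descendants n \<Gamma> (Aer k) = insert k (descendants n \<Gamma> (fst (\<Gamma> k)) \<union> descendants n \<Gamma> (snd (\<Gamma> k)))"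
proof -
  have "(Aer k, v) \<in> edge_rel n \<Gamma> \<longleftrightarrow> v = fst (\<Gamma> k) \<or> v = snd (\<Gamma> k)" for v
    using assms by (auto simp: edge_rel_iff)
  then show ?thesis
    unfolding descendants_def
    by (auto elim: converse_rtranclE intro: converse_rtrancl_into_rtrancl)
qed

definition roots :: "nat \<Rightarrow> graph \<Rightarrow> nat set" where
  "roots n \<Gamma> = {\<rho> \<in> {1..n}. \<forall>u. (u, Aer \<rho>) \<notin> edge_rel n \<Gamma>}"

lemma reaches_root_imp_eq: "\<rho> \<in> roots n \<Gamma> \<Longrightarrow> (v, Aer \<rho>) \<in> (edge_rel n \<Gamma>)\<^sup>* \<Longrightarrow> v = Aer \<rho>"
  unfolding roots_def by (auto elim: rtranclE)

definition subtree_at :: "nat \<Rightarrow> graph \<Rightarrow> vtx \<Rightarrow> btree \<Rightarrow> bool" where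
  "subtree_at n \<Gamma> v t \<longleftrightarrow> tree_of_graph \<Gamma> t \<and> root_vtx t = v
     \<and> set (internal t) = descendants n \<Gamma> v \<and> distinct (internal t)"

lemma subtree_at_Aer: "subtree_at n \<Gamma> (Aer k) t \<Longrightarrow> \<exists>l r. t = Node k l r"
  unfolding subtree_at_def by (cases t rule: root_vtx.cases) auto

locale aerial_forest =
  fixes n :: nat and \<Gamma> :: graph
  assumes graph: "in_G n \<Gamma>"
    and acyclic: "acyclic (edge_rel n \<Gamma>)"
    and in_degree_le_1: "\<And>k. k \<in> {1..n} \<Longrightarrow> length (edges_into n \<Gamma> (Aer k)) \<le> 1"
begin

abbreviation E :: "(vtx \<times> vtx) set" where
  "E \<equiv> edge_rel n \<Gamma>"

lemma children_in_verts: "k \<in> {1..n} \<Longrightarrow> fst (\<Gamma> k) \<in> verts n \<and> snd (\<Gamma> k) \<in> verts n"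
  using graph unfolding in_G_def by blast

lemma tgt_in_verts: "e \<in> edges n \<Longrightarrow> tgt \<Gamma> e \<in> verts n"
  using children_in_verts by (auto simp: edges_def tgt_def)

lemma edge_into_aerial_unique:
  assumes "e \<in> edges n" "tgt \<Gamma> e = Aer j" and "e' \<in> edges n" "tgt \<Gamma> e' = Aer j"
  shows "e = e'"
proof -
  have "Aer j \<in> verts n"
    using tgt_in_verts[OF assms(1)] assms(2) by simp
  then show ?thesis
    using edge_into_unique[OF in_degree_le_1] assms by (simp add: Aer_in_verts_iff)
qed

lemma parent_unique:
  assumes "(u, Aer j) \<in> E" and "(w, Aer j) \<in> E"
  shows "u = w"
proof -
  obtain e e' where "e \<in> edges n" "u = Aer (fst e)" "tgt \<Gamma> e = Aer j"
    and "e' \<in> edges n" "w = Aer (fst e')" "tgt \<Gamma> e' = Aer j"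
    using assms unfolding edge_rel_def by fastforce
  then show ?thesis
    using edge_into_aerial_unique by metis
qed

lemma children_distinct: "k \<in> {1..n} \<Longrightarrow> fst (\<Gamma> k) = Aer j \<Longrightarrow> snd (\<Gamma> k) \<noteq> Aer j"
  using edge_into_aerial_unique[of "(k, 1)" j "(k, 2)"] by (auto simp: edges_def tgt_def)

lemma no_cycle: "(v, v) \<notin> E\<^sup>+"
  using acyclic unfolding acyclic_def by blast

lemma ancestors_comparable:
  assumes "(x, z) \<in> E\<^sup>*" and "(y, z) \<in> E\<^sup>*" and "z = Aer j"
  shows "(x, y) \<in> E\<^sup>* \<or> (y, x) \<in> E\<^sup>*"
  using assms
proof (induction arbitrary: j y rule: rtrancl_induct)
  case base
  then show ?case by blast
next
  case (step w z)
  show ?case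
  proof (cases "y = z")
    case True
    then show ?thesis using step.hyps by (meson rtrancl.rtrancl_into_rtrancl)
  next
    case False
    then obtain u where yu: "(y, u) \<in> E\<^sup>*" and uz: "(u, z) \<in> E"
      using step.prems(1) by (meson rtranclE)
    have "u = w" using parent_unique uz step.hyps(2) step.prems(2) by blast
    moreover obtain k where "w = Aer k" using step.hyps(2) by (auto simp: edge_rel_iff)
    ultimately show ?thesis using step.IH yu by blast
  qed
qed

lemma not_in_descendants_of_child: "(Aer k, v) \<in> E \<Longrightarrow> k \<notin> descendants n \<Gamma> v"
  using no_cycle unfolding descendants_def by (blast intro: rtrancl_into_trancl2)

lemma sibling_unreachable:
  assumes "(Aer k, a) \<in> E" and "(Aer k, Aer j) \<in> E" and "(a, Aer j) \<in> E\<^sup>*"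
  shows "a = Aer j"
proof (rule ccontr)
  assume "a \<noteq> Aer j"
  then obtain u where "(a, u) \<in> E\<^sup>*" and u: "(u, Aer j) \<in> E"
    using assms(3) by (meson rtranclD tranclD2)
  moreover have "u = Aer k"
    using parent_unique assms(2) u by blast
  ultimately have "(Aer k, Aer k) \<in> E\<^sup>+"
    using assms(1) by (auto intro: rtrancl_into_trancl2)
  then show False
    using no_cycle by blast
qed

lemma descendants_children_disjoint:
  assumes k: "k \<in> {1..n}"
  shows "descendants n \<Gamma> (fst (\<Gamma> k)) \<inter> descendants n \<Gamma> (snd (\<Gamma> k)) = {}"
proof (rule ccontr)
  define a where "a = fst (\<Gamma> k)"
  define b where "b = snd (\<Gamma> k)"
  assume "descendants n \<Gamma> (fst (\<Gamma> k)) \<inter> descendants n \<Gamma> (snd (\<Gamma> k)) \<noteq> {}"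
  then obtain m where ma: "(a, Aer m) \<in> E\<^sup>*" and mb: "(b, Aer m) \<in> E\<^sup>*"
    unfolding descendants_def a_def b_def by auto
  obtain ja jb where ja: "a = Aer ja" and jb: "b = Aer jb"
    using reaches_aerial_imp_aerial ma mb by blast
  have "a \<noteq> b"
    using children_distinct[OF k] ja unfolding a_def b_def by metis
  moreover have "(Aer k, a) \<in> E" "(Aer k, b) \<in> E"
    using k by (auto simp: a_def b_def edge_rel_iff)
  ultimately show False
    using ancestors_comparable[OF ma mb refl] sibling_unreachable ja jb by metis
qed

lemma exists_subtree: "v \<in> verts n \<Longrightarrow> \<exists>t. subtree_at n \<Gamma> v t"
proof (induction v rule: wf_induct_rule[OF finite_acyclic_wf_converse[OF finite_edge_rel acyclic]])
  case (1 v)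
  show ?case
  proof (cases v)
    case VX
    then show ?thesis
      by (intro exI[of _ "Leaf LX"]) (simp add: subtree_at_def descendants_ground)
  next
    case VY
    then show ?thesis
      by (intro exI[of _ "Leaf LY"]) (simp add: subtree_at_def descendants_ground)
  next
    case (Aer k)
    with "1.prems" have k: "k \<in> {1..n}"
      by (simp add: Aer_in_verts_iff)
    have edges: "(Aer k, fst (\<Gamma> k)) \<in> E" "(Aer k, snd (\<Gamma> k)) \<in> E"
      using k by (auto simp: edge_rel_iff)
    obtain l where l: "subtree_at n \<Gamma> (fst (\<Gamma> k)) l"
      using "1.IH"[of "fst (\<Gamma> k)"] edges(1) children_in_verts[OF k] Aer by blast
    obtain r where r: "subtree_at n \<Gamma> (snd (\<Gamma> k)) r"
      using "1.IH"[of "snd (\<Gamma> k)"] edges(2) children_in_verts[OF k] Aer by blast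
    have "k \<notin> descendants n \<Gamma> (fst (\<Gamma> k))" "k \<notin> descendants n \<Gamma> (snd (\<Gamma> k))"
      using not_in_descendants_of_child[OF edges(1)] not_in_descendants_of_child[OF edges(2)] .
    then have "subtree_at n \<Gamma> v (Node k l r)"
      using l r Aer descendants_Aer[OF k] descendants_children_disjoint[OF k]
      by (simp add: subtree_at_def)
    then show ?thesis ..
  qed
qed

lemma exists_root_ancestor: "v \<in> Aer ` {1..n} \<Longrightarrow> \<exists>\<rho>\<in>roots n \<Gamma>. (Aer \<rho>, v) \<in> E\<^sup>*"
proof (induction v rule: wf_induct_rule[OF finite_acyclic_wf[OF finite_edge_rel acyclic]])
  case (1 v)
  then obtain m where v: "v = Aer m" "m \<in> {1..n}"
    by blast
  show ?case
  proof (cases "m \<in> roots n \<Gamma>")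
    case True
    then show ?thesis using v by blast
  next
    case False
    then obtain u where u: "(u, v) \<in> E"
      using v unfolding roots_def by auto
    then have "u \<in> Aer ` {1..n}"
      by (auto simp: edge_rel_iff)
    then obtain \<rho> where "\<rho> \<in> roots n \<Gamma>" "(Aer \<rho>, u) \<in> E\<^sup>*"
      using "1.IH" u by blast
    then show ?thesis
      using u by (meson rtrancl_into_rtrancl)
  qed
qed

lemma descendants_of_roots_disjoint:
  assumes "\<rho>1 \<in> roots n \<Gamma>" "\<rho>2 \<in> roots n \<Gamma>"
    and "m \<in> descendants n \<Gamma> (Aer \<rho>1)" "m \<in> descendants n \<Gamma> (Aer \<rho>2)"
  shows "\<rho>1 = \<rho>2"
proof -
  have "(Aer \<rho>1, Aer m) \<in> E\<^sup>*" "(Aer \<rho>2, Aer m) \<in> E\<^sup>*"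
    using assms(3,4) unfolding descendants_def by simp_all
  then have "(Aer \<rho>1, Aer \<rho>2) \<in> E\<^sup>* \<or> (Aer \<rho>2, Aer \<rho>1) \<in> E\<^sup>*"
    using ancestors_comparable[OF _ _ refl] by blast
  then show ?thesis
    using reaches_root_imp_eq assms(1,2) by blast
qed

lemma descendants_subset:
  assumes "v \<in> verts n"
  shows "descendants n \<Gamma> v \<subseteq> {1..n}"
proof
  fix m
  assume "m \<in> descendants n \<Gamma> v"
  then have "(v, Aer m) \<in> E\<^sup>*"
    by (simp add: descendants_def)
  then have "Aer m \<in> verts n"
  proof (cases rule: rtranclE)
    case base
    then show ?thesis using assms by simp
  next
    case (step u)
    then show ?thesis by (metis edge_rel_iff children_in_verts)
  qed
  then show "m \<in> {1..n}"
    by (simp add: Aer_in_verts_iff)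
qed

lemma descendants_of_roots_cover: "(\<Union>\<rho>\<in>roots n \<Gamma>. descendants n \<Gamma> (Aer \<rho>)) = {1..n}"
proof
  show "(\<Union>\<rho>\<in>roots n \<Gamma>. descendants n \<Gamma> (Aer \<rho>)) \<subseteq> {1..n}"
    using descendants_subset unfolding roots_def by (force simp: Aer_in_verts_iff)
  show "{1..n} \<subseteq> (\<Union>\<rho>\<in>roots n \<Gamma>. descendants n \<Gamma> (Aer \<rho>))"
    using exists_root_ancestor unfolding descendants_def by blast
qed

theorem sym_admissible: "sym_admissible n \<Gamma>"
proof -
  have "\<forall>\<rho>\<in>roots n \<Gamma>. \<exists>t. subtree_at n \<Gamma> (Aer \<rho>) t"
    using exists_subtree by (simp add: roots_def Aer_in_verts_iff)
  then obtain T where T: "\<And>\<rho>. \<rho> \<in> roots n \<Gamma> \<Longrightarrow> subtree_at n \<Gamma> (Aer \<rho>) (T \<rho>)"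
    by metis
  define \<rho>s where "\<rho>s = sorted_list_of_set (roots n \<Gamma>)"
  have \<rho>s: "set \<rho>s = roots n \<Gamma>" "distinct \<rho>s"
    unfolding \<rho>s_def roots_def by auto
  define ts where "ts = map T \<rho>s"
  have "\<forall>t\<in>set ts. (\<exists>k l r. t = Node k l r) \<and> tree_of_graph \<Gamma> t"
    using T subtree_at_Aer \<rho>s(1) unfolding ts_def subtree_at_def by fastforce
  moreover have "distinct (concat (map internal ts))"
    unfolding ts_def map_map
  proof (rule distinct_concat_map)
    show "distinct \<rho>s" by (fact \<rho>s(2))
    show "distinct ((internal \<circ> T) \<rho>)" if "\<rho> \<in> set \<rho>s" for \<rho>
      using T that \<rho>s(1) unfolding subtree_at_def by simp
    show "set ((internal \<circ> T) \<rho>1) \<inter> set ((internal \<circ> T) \<rho>2) = {}"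
      if "\<rho>1 \<in> set \<rho>s" "\<rho>2 \<in> set \<rho>s" "\<rho>1 \<noteq> \<rho>2" for \<rho>1 \<rho>2
      using that T \<rho>s(1) descendants_of_roots_disjoint unfolding subtree_at_def by fastforce
  qed
  moreover have "set (concat (map internal ts)) = {1..n}"
    using T \<rho>s(1) descendants_of_roots_cover unfolding ts_def subtree_at_def by simp
  ultimately show ?thesis
    unfolding sym_admissible_def by blast
qed

end

theorem proposition5p1p2:
  fixes c :: "'d::finite \<Rightarrow> 'd \<Rightarrow> 'd \<Rightarrow> real"
    and n :: nat and \<Gamma> :: graph
  assumes antisym: "\<And>i j k. c i j k = - c j i k"
    and jacobi: "\<And>i j l r. (\<Sum>m\<in>UNIV. c i j m * c m l r + c j l m * c m i r + c l i m * c m j r) = 0"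
    and graph: "in_G n \<Gamma>"
    and nonzero: "\<exists>f g x. smooth_fun f \<and> smooth_fun g \<and> B_op n \<Gamma> (lin_bivector c) f g x \<noteq> 0"
  shows "loop_graph n \<Gamma> \<or> sym_admissible n \<Gamma>"
proof (cases "loop_graph n \<Gamma>")
  case False
  then have "acyclic (edge_rel n \<Gamma>)"
    unfolding loop_graph_def acyclic_def by blast
  moreover have "length (edges_into n \<Gamma> (Aer k)) \<le> 1" if "k \<in> {1..n}" for k
  proof (rule ccontr)
    assume "\<not> length (edges_into n \<Gamma> (Aer k)) \<le> 1"
    then have "B_op n \<Gamma> (lin_bivector c) f g x = 0" for f g x
      using B_op_eq_0_if_in_degree_ge_2[of "lin_bivector c", OF linear_lin_bivector that] by simp
    then show False
      using nonzero by blast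
  qed
  ultimately interpret aerial_forest n \<Gamma>
    using graph by unfold_locales
  show ?thesis
    using sym_admissible by blast
qed simp

end
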